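(* Suppose every $f_i$ is monotone and submodular. Let $S^{(1)}_{\rm tr},S^{(1)}_1,\dots,S^{(1)}_m$ be the output of Algorithm 1 and $S^{(2)}_{\rm tr},S^{(2)}_1,\dots,S^{(2)}_m$ the output of Algorithm 2. Set $\theta_1=\sum_i f_i(S^{(1)}_{\rm tr}\cup S^{(1)}_i)$, $\theta_2=\sum_i f_i(S^{(2)}_{\rm tr}\cup S^{(2)}_i)$, $\beta=\sum_i f_i(S^{(1)}_{\rm tr})$, $\gamma=\sum_i f_i(S^{(2)}_i)$. Then $$\theta_1\ge (1-1/e)(\mathrm{OPT}-\gamma)+\beta-2(\theta_2-\gamma)\quad\text{and}\quad \theta_2\ge (1-1/e)(\mathrm{OPT}-\beta)+\gamma-2(\theta_1-\beta).$$
   Context: $V$ is a finite ground set with $|V|=n$; $k,l$ are integers with $1\le l<k\le n$. For $i=1,\dots,m$, $f_i:2^V\to\mathbb{R}_{\ge 0}$; monotone means $A\subseteq B\Rightarrow f_i(A)\le f_i(B)$, submodular means $f_i(A)+f_i(B)\ge f_i(A\cup B)+f_i(A\cap B)$. Write $\Delta_i(e\mid S)=f_i(S\cup\{e\})-f_i(S)$ and $$\mathrm{OPT}=\max_{S_{\rm tr}\subseteq V,\,|S_{\rm tr}|\le l}\;\sum_{i=1}^m\;\max_{S_i\subseteq V,\,|S_i|\le k-l} f_i(S_{\rm tr}\cup S_i).$$ Algorithm 1: start with all sets empty. Phase 1: for $t=1,\dots,l$, choose $e^*\in\arg\max_{e\in V\setminus S_{\rm tr}}\sum_{i}\Delta_i(e\mid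 S_{\rm tr})$ and add it to $S_{\rm tr}$. Phase 2: for $t=1,\dots,k-l$ and each $i$, choose $e_i^*\in\arg\max_{e\in V\setminus(S_{\rm tr}\cup S_i)}\Delta_i(e\mid S_{\rm tr}\cup S_i)$ and add it to $S_i$. Algorithm 2: start with all sets empty. Phase 1: for each $i$ and $t=1,\dots,k-l$, choose $e_i^*\in\arg\max_{e\in V\setminus S_i}\Delta_i(e\mid S_i)$ and add it to $S_i$. Phase 2: for $t=1,\dots,l$, choose $e^*\in\arg\max_{e\in V\setminus S_{\rm tr}}\sum_i\Delta_i(e\mid S_{\rm tr}\cup S_i)$ and add it to $S_{\rm tr}$. Ties are broken arbitrarily. *)

theory Defs
  imports Complex_Main
begin

definition monotone_fn :: "'a set \<Rightarrow> ('a set \<Rightarrow> real) \<Rightarrow> bool" where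
  "monotone_fn V g \<longleftrightarrow> (\<forall>A B. A \<subseteq> B \<and> B \<subseteq> V \<longrightarrow> g A \<le> g B)"

definition submodular_fn :: "'a set \<Rightarrow> ('a set \<Rightarrow> real) \<Rightarrow> bool" where
  "submodular_fn V g \<longleftrightarrow> (\<forall>A B. A \<subseteq> V \<and> B \<subseteq> V \<longrightarrow> g A + g B \<ge> g (A \<union> B) + g (A \<inter> B))"

definition marg :: "('a set \<Rightarrow> real) \<Rightarrow> 'a \<Rightarrow> 'a set \<Rightarrow> real" where
  "marg g e S = g (insert e S) - g S"

definition greedy_chain :: "'a set \<Rightarrow> 'a set \<Rightarrow> ('a set \<Rightarrow> 'a \<Rightarrow> real) \<Rightarrow> nat \<Rightarrow> (nat \<Rightarrow> 'a set) \<Rightarrow> bool" where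
  "greedy_chain V B gain T X \<longleftrightarrow> X 0 = {} \<and>
     (\<forall>t<T. \<exists>e \<in> V - (B \<union> X t). X (Suc t) = insert e (X t) \<and>
        (\<forall>e' \<in> V - (B \<union> X t). gain (X t) e' \<le> gain (X t) e))"

definition alg1_output :: "'a set \<Rightarrow> (nat \<Rightarrow> 'a set \<Rightarrow> real) \<Rightarrow> nat \<Rightarrow> nat \<Rightarrow> nat \<Rightarrow> 'a set \<Rightarrow> (nat \<Rightarrow> 'a set) \<Rightarrow> bool" where
  "alg1_output V f m k l Str S \<longleftrightarrow>
     (\<exists>X. greedy_chain V {} (\<lambda>A e. \<Sum>i\<in>{1..m}. marg (f i) e A) l X \<and> Str = X l) \<and>
     (\<forall>i\<in>{1..m}. \<exists>Y. greedy_chain V Str (\<lambda>A e. marg (f i) e (Str \<union> A)) (k - l) Y \<and> S i = Y (k - l))"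

definition alg2_output :: "'a set \<Rightarrow> (nat \<Rightarrow> 'a set \<Rightarrow> real) \<Rightarrow> nat \<Rightarrow> nat \<Rightarrow> nat \<Rightarrow> 'a set \<Rightarrow> (nat \<Rightarrow> 'a set) \<Rightarrow> bool" where
  "alg2_output V f m k l Str S \<longleftrightarrow>
     (\<forall>i\<in>{1..m}. \<exists>Y. greedy_chain V {} (\<lambda>A e. marg (f i) e A) (k - l) Y \<and> S i = Y (k - l)) \<and>
     (\<exists>X. greedy_chain V {} (\<lambda>A e. \<Sum>i\<in>{1..m}. marg (f i) e (A \<union> S i)) l X \<and> Str = X l)"

definition OPT :: "'a set \<Rightarrow> (nat \<Rightarrow> 'a set \<Rightarrow> real) \<Rightarrow> nat \<Rightarrow> nat \<Rightarrow> nat \<Rightarrow> real" where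
  "OPT V f m k l = Max {(\<Sum>i\<in>{1..m}. Max {f i (T \<union> S) | S. S \<subseteq> V \<and> card S \<le> k - l}) | T. T \<subseteq> V \<and> card T \<le> l}"

end

theory Submission
  imports Defs
begin

text \<open>The second phase of each algorithm is a greedy run for a monotone submodular objective
  (each \<open>f\<^sub>i\<close> above the shared set for Algorithm 1, the aggregate \<open>A \<mapsto> \<Sum>\<^sub>i f\<^sub>i (A \<union> S\<^sub>i)\<close>
  for Algorithm 2), so it gains at least a \<open>1 - 1/e\<close> fraction of what any competitor of the same
  size would gain. Algorithm 1 is compared with an optimal family and with Algorithm 2's personal
  sets, Algorithm 2 with an optimal shared set and with Algorithm 1's shared set; two four-set
  exchange inequalities for monotone submodular functions bound OPT by these competitor values.
  The first phases only matter through the sizes of the sets they produce.\<close>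

lemma monotone_fnD: "monotone_fn V F \<Longrightarrow> A \<subseteq> B \<Longrightarrow> B \<subseteq> V \<Longrightarrow> F A \<le> F B"
  unfolding monotone_fn_def by blast

lemma submodular_fnD:
  "submodular_fn V F \<Longrightarrow> A \<subseteq> V \<Longrightarrow> B \<subseteq> V \<Longrightarrow> F (A \<union> B) + F (A \<inter> B) \<le> F A + F B"
  unfolding submodular_fn_def by blast

lemma monotone_fn_union_const:
  assumes "monotone_fn V F" "C \<subseteq> V"
  shows "monotone_fn V (\<lambda>A. F (A \<union> C))"
  unfolding monotone_fn_def using assms by (auto intro: monotone_fnD)

lemma submodular_fn_union_const:
  assumes "submodular_fn V F" "C \<subseteq> V"
  shows "submodular_fn V (\<lambda>A. F (A \<union> C))"
  unfolding submodular_fn_def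
proof (intro allI impI)
  fix A B assume "A \<subseteq> V \<and> B \<subseteq> V"
  then have "F ((A \<union> C) \<union> (B \<union> C)) + F ((A \<union> C) \<inter> (B \<union> C)) \<le> F (A \<union> C) + F (B \<union> C)"
    using assms by (intro submodular_fnD) auto
  moreover have "(A \<union> C) \<union> (B \<union> C) = A \<union> B \<union> C" "(A \<union> C) \<inter> (B \<union> C) = A \<inter> B \<union> C"
    by auto
  ultimately show "F (A \<union> C) + F (B \<union> C) \<ge> F (A \<union> B \<union> C) + F (A \<inter> B \<union> C)"
    by simp
qed

lemma monotone_fn_sum:
  "(\<And>i. i \<in> I \<Longrightarrow> monotone_fn V (F i)) \<Longrightarrow> monotone_fn V (\<lambda>A. \<Sum>i\<in>I. F i A)"
  unfolding monotone_fn_def by (auto intro: sum_mono)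

lemma submodular_fn_sum:
  assumes "\<And>i. i \<in> I \<Longrightarrow> submodular_fn V (F i)"
  shows "submodular_fn V (\<lambda>A. \<Sum>i\<in>I. F i A)"
  unfolding submodular_fn_def
proof (intro allI impI)
  fix A B assume "A \<subseteq> V \<and> B \<subseteq> V"
  then have "(\<Sum>i\<in>I. F i (A \<union> B) + F i (A \<inter> B)) \<le> (\<Sum>i\<in>I. F i A + F i B)"
    using assms by (intro sum_mono submodular_fnD) auto
  then show "(\<Sum>i\<in>I. F i A) + (\<Sum>i\<in>I. F i B) \<ge> (\<Sum>i\<in>I. F i (A \<union> B)) + (\<Sum>i\<in>I. F i (A \<inter> B))"
    by (simp add: sum.distrib)
qed

lemma submodular_fn_union_le_sum_marg:
  assumes sub: "submodular_fn V F" and "finite C" "C \<subseteq> V" "A \<subseteq> V"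
  shows "F (A \<union> C) \<le> F A + (\<Sum>c\<in>C. marg F c A)"
  using assms(2,3)
proof (induction C rule: finite_induct)
  case empty then show ?case by simp
next
  case (insert c C)
  have "F (insert c A \<union> (A \<union> C)) + F (insert c A \<inter> (A \<union> C)) \<le> F (insert c A) + F (A \<union> C)"
    using insert.prems assms(4) by (intro submodular_fnD[OF sub]) auto
  moreover have "insert c A \<union> (A \<union> C) = A \<union> insert c C" "insert c A \<inter> (A \<union> C) = A"
    using insert.hyps(2) by auto
  ultimately show ?case
    using insert by (simp add: marg_def)
qed

lemma greedy_chain_set:
  assumes "greedy_chain V B gain T X" "t \<le> T"
  shows "X t \<subseteq> V - B \<and> card (X t) = t \<and> finite (X t)"
  using assms(2)
proof (induction t)
  case 0 then show ?case using assms(1) by (simp add: greedy_chain_def)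
next
  case (Suc t)
  then obtain e where "e \<in> V - (B \<union> X t)" "X (Suc t) = insert e (X t)"
    using assms(1) unfolding greedy_chain_def by (meson Suc_le_lessD)
  then show ?case using Suc by auto
qed

text \<open>A greedy step closes at least a \<open>1/T\<close> fraction of the gap to any competitor of size at
  most \<open>T\<close>: by submodularity the gap is at most the sum of the competitor's marginal gains, each
  of which the greedy choice dominates.\<close>

lemma greedy_chain_step_gap:
  assumes mono: "monotone_fn V F" and sub: "submodular_fn V F" and "B \<subseteq> V"
    and chain: "greedy_chain V B gain T X"
    and gain: "\<And>A e. gain A e = marg F e (B \<union> A)"
    and "t < T" and "finite Oc" "Oc \<subseteq> V" "card Oc \<le> T"
  shows "F (B \<union> Oc) - F (B \<union> X t) \<le> real T * (F (B \<union> X (Suc t)) - F (B \<union> X t))"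
proof -
  let ?A = "B \<union> X t"
  have AV: "?A \<subseteq> V"
    using greedy_chain_set[OF chain less_imp_le[OF \<open>t < T\<close>]] \<open>B \<subseteq> V\<close> by auto
  obtain e where e: "e \<in> V - ?A" "X (Suc t) = insert e (X t)"
    and best: "\<And>e'. e' \<in> V - ?A \<Longrightarrow> gain (X t) e' \<le> gain (X t) e"
    using chain \<open>t < T\<close> unfolding greedy_chain_def by blast
  have gain_nonneg: "0 \<le> marg F e ?A"
    using AV e(1) unfolding marg_def by (intro diff_ge_0_iff_ge[THEN iffD2] monotone_fnD[OF mono]) auto
  have "F (B \<union> Oc) \<le> F (?A \<union> Oc)"
    using AV \<open>Oc \<subseteq> V\<close> by (intro monotone_fnD[OF mono]) auto
  also have "\<dots> \<le> F ?A + (\<Sum>x\<in>Oc. marg F x ?A)"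
    using AV assms(7,8) by (intro submodular_fn_union_le_sum_marg[OF sub])
  also have "(\<Sum>x\<in>Oc. marg F x ?A) \<le> (\<Sum>x\<in>Oc. marg F e ?A)"
  proof (rule sum_mono)
    fix x assume "x \<in> Oc"
    show "marg F x ?A \<le> marg F e ?A"
    proof (cases "x \<in> ?A")
      case True then show ?thesis using gain_nonneg by (simp add: marg_def insert_absorb)
    next
      case False
      then show ?thesis using best[of x] \<open>x \<in> Oc\<close> \<open>Oc \<subseteq> V\<close> by (auto simp: gain)
    qed
  qed
  also have "\<dots> \<le> real T * marg F e ?A"
    using \<open>card Oc \<le> T\<close> gain_nonneg by (simp add: mult_right_mono)
  finally show ?thesis
    using e(2) by (simp add: marg_def)
qed

lemma geometric_gap_decay:
  fixes d :: "nat \<Rightarrow> real"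
  assumes "0 < T" and step: "\<And>t. t < T \<Longrightarrow> d t \<le> real T * (d t - d (Suc t))" and "0 \<le> d 0"
  shows "d T \<le> exp (-1) * d 0"
proof -
  let ?q = "1 - 1 / real T"
  have q_nonneg: "0 \<le> ?q" using \<open>0 < T\<close> by simp
  have "d t \<le> ?q ^ t * d 0" if "t \<le> T" for t
    using that
  proof (induction t)
    case 0 then show ?case by simp
  next
    case (Suc t)
    have "real T * d (Suc t) \<le> (real T - 1) * d t"
      using step[of t] Suc.prems by (simp add: algebra_simps)
    then have "d (Suc t) \<le> ?q * d t"
      using \<open>0 < T\<close> by (simp add: field_simps)
    also have "\<dots> \<le> ?q * (?q ^ t * d 0)"
      using Suc q_nonneg by (intro mult_left_mono) auto
    finally show ?case by simp
  qed
  also have "?q ^ T * d 0 \<le> exp (-1) * d 0"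
    using exp_ge_one_minus_x_over_n_power_n[of 1 T] \<open>0 < T\<close> \<open>0 \<le> d 0\<close>
    by (intro mult_right_mono) auto
  finally show ?thesis by simp
qed

lemma greedy_chain_approximation:
  assumes mono: "monotone_fn V F" and sub: "submodular_fn V F" and "B \<subseteq> V"
    and chain: "greedy_chain V B gain T X"
    and gain: "\<And>A e. gain A e = marg F e (B \<union> A)"
    and "0 < T" and "finite Oc" "Oc \<subseteq> V" "card Oc \<le> T"
  shows "(1 - 1 / exp 1) * (F (B \<union> Oc) - F B) \<le> F (B \<union> X T) - F B"
proof -
  define d where "d t = F (B \<union> Oc) - F (B \<union> X t)" for t
  have X0: "X 0 = {}" using chain by (simp add: greedy_chain_def)
  have "d T \<le> exp (-1) * d 0"
  proof (rule geometric_gap_decay[OF \<open>0 < T\<close>])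
    show "d t \<le> real T * (d t - d (Suc t))" if "t < T" for t
      using greedy_chain_step_gap[OF assms(1-5) that assms(7-9)] by (simp add: d_def)
    show "0 \<le> d 0"
      using X0 \<open>B \<subseteq> V\<close> \<open>Oc \<subseteq> V\<close> by (simp add: d_def monotone_fnD[OF mono])
  qed
  then show ?thesis
    using X0 by (simp add: d_def exp_minus field_simps)
qed

lemma monotone_submodular_exchange_diff:
  assumes mono: "monotone_fn V f" and sub: "submodular_fn V f"
    and "T \<subseteq> V" "S \<subseteq> V" "R \<subseteq> V" "Q \<subseteq> V"
  shows "f (T \<union> S) - f (R \<union> S) \<le> (f (T \<union> Q) - f Q) + (f (R \<union> Q) - f R)"
proof -
  have "f (T \<union> S) \<le> f (T \<union> R \<union> S)"
    and "f ((T \<union> R) \<union> (R \<union> S)) + f ((T \<union> R) \<inter> (R \<union> S)) \<le> f (T \<union> R) + f (R \<union> S)"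
    and "f R \<le> f ((T \<union> R) \<inter> (R \<union> S))"
    and "f (T \<union> R) \<le> f (T \<union> R \<union> Q)"
    and "f ((T \<union> Q) \<union> (R \<union> Q)) + f ((T \<union> Q) \<inter> (R \<union> Q)) \<le> f (T \<union> Q) + f (R \<union> Q)"
    and "f Q \<le> f ((T \<union> Q) \<inter> (R \<union> Q))"
    using assms(3-6) by (auto intro!: monotone_fnD[OF mono] submodular_fnD[OF sub])
  moreover have "(T \<union> R) \<union> (R \<union> S) = T \<union> R \<union> S" "(T \<union> Q) \<union> (R \<union> Q) = T \<union> R \<union> Q"
    by auto
  ultimately show ?thesis by (smt (verit))
qed

lemma monotone_submodular_exchange_sum:
  assumes mono: "monotone_fn V f" and sub: "submodular_fn V f"
    and "T \<subseteq> V" "S \<subseteq> V" "R \<subseteq> V" "Q \<subseteq> V"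
  shows "f (T \<union> S) + f Q + f R \<le> f (T \<union> Q) + f (R \<union> S) + f (R \<union> Q)"
proof -
  have "f (T \<union> S) \<le> f (T \<union> S \<union> Q)"
    and "f ((T \<union> Q) \<union> (S \<union> Q)) + f ((T \<union> Q) \<inter> (S \<union> Q)) \<le> f (T \<union> Q) + f (S \<union> Q)"
    and "f Q \<le> f ((T \<union> Q) \<inter> (S \<union> Q))"
    and "f ((R \<union> S) \<union> (R \<union> Q)) + f ((R \<union> S) \<inter> (R \<union> Q)) \<le> f (R \<union> S) + f (R \<union> Q)"
    and "f (S \<union> Q) \<le> f ((R \<union> S) \<union> (R \<union> Q))"
    and "f R \<le> f ((R \<union> S) \<inter> (R \<union> Q))"
    using assms(3-6) by (auto intro!: monotone_fnD[OF mono] submodular_fnD[OF sub])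
  moreover have "(T \<union> Q) \<union> (S \<union> Q) = T \<union> S \<union> Q"
    by auto
  ultimately show ?thesis by (smt (verit))
qed

lemma OPT_attained:
  assumes "finite V"
  obtains T S where "T \<subseteq> V" "card T \<le> l" "\<And>i. S i \<subseteq> V" "\<And>i. card (S i) \<le> k - l"
    and "OPT V f m k l = (\<Sum>i\<in>{1..m}. f i (T \<union> S i))"
proof -
  define inner where "inner T i = Max {f i (T \<union> S) | S. S \<subseteq> V \<and> card S \<le> k - l}" for T i
  have fin: "finite {S. S \<subseteq> V \<and> P S}" for P :: "'a set \<Rightarrow> bool"
    using assms by (rule rev_finite_subset[OF finite_Pow_iff[THEN iffD2]]) auto
  have "OPT V f m k l \<in> {(\<Sum>i\<in>{1..m}. inner T i) | T. T \<subseteq> V \<and> card T \<le> l}"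
    unfolding OPT_def inner_def by (rule Max_in) (use fin in \<open>auto intro: finite_image_set\<close>)
  then obtain T where T: "T \<subseteq> V" "card T \<le> l" "OPT V f m k l = (\<Sum>i\<in>{1..m}. inner T i)"
    by blast
  have "\<exists>S. S \<subseteq> V \<and> card S \<le> k - l \<and> inner T i = f i (T \<union> S)" for i
  proof -
    have "inner T i \<in> {f i (T \<union> S) | S. S \<subseteq> V \<and> card S \<le> k - l}"
      unfolding inner_def by (rule Max_in) (use fin in \<open>auto intro: finite_image_set\<close>)
    then show ?thesis by blast
  qed
  then obtain S where "\<And>i. S i \<subseteq> V" "\<And>i. card (S i) \<le> k - l" "\<And>i. inner T i = f i (T \<union> S i)"
    by metis
  with T show thesis by (intro that[of T S]) simp_all
qed

lemma alg1_output_Str: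
  assumes "alg1_output V f m k l Str S"
  shows "Str \<subseteq> V" "card Str = l"
proof -
  obtain X where "greedy_chain V {} (\<lambda>A e. \<Sum>i\<in>{1..m}. marg (f i) e A) l X" "Str = X l"
    using assms unfolding alg1_output_def by blast
  then show "Str \<subseteq> V" "card Str = l"
    using greedy_chain_set[of V "{}" _ l _ l] by auto
qed

lemma alg2_output_S:
  assumes "alg2_output V f m k l Str S" "i \<in> {1..m}"
  shows "S i \<subseteq> V" "card (S i) = k - l"
proof -
  obtain Y where "greedy_chain V {} (\<lambda>A e. marg (f i) e A) (k - l) Y" "S i = Y (k - l)"
    using assms unfolding alg2_output_def by blast
  then show "S i \<subseteq> V" "card (S i) = k - l"
    using greedy_chain_set[of V "{}" _ "k - l" _ "k - l"] by auto
qed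

lemma alg1_output_approximation:
  assumes "finite V" "l < k"
    and mono: "\<And>i. i \<in> {1..m} \<Longrightarrow> monotone_fn V (f i)"
    and sub: "\<And>i. i \<in> {1..m} \<Longrightarrow> submodular_fn V (f i)"
    and alg: "alg1_output V f m k l Str S"
    and "\<And>i. i \<in> {1..m} \<Longrightarrow> C i \<subseteq> V" "\<And>i. i \<in> {1..m} \<Longrightarrow> card (C i) \<le> k - l"
  shows "(1 - 1 / exp 1) * ((\<Sum>i\<in>{1..m}. f i (Str \<union> C i)) - (\<Sum>i\<in>{1..m}. f i Str))
    \<le> (\<Sum>i\<in>{1..m}. f i (Str \<union> S i)) - (\<Sum>i\<in>{1..m}. f i Str)"
proof -
  have "(1 - 1 / exp 1) * (f i (Str \<union> C i) - f i Str) \<le> f i (Str \<union> S i) - f i Str"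
    if i: "i \<in> {1..m}" for i
  proof -
    obtain Y where Y: "greedy_chain V Str (\<lambda>A e. marg (f i) e (Str \<union> A)) (k - l) Y" "S i = Y (k - l)"
      using alg i unfolding alg1_output_def by blast
    show ?thesis unfolding Y(2)
      using assms(1,2,6,7) i alg1_output_Str[OF alg]
      by (intro greedy_chain_approximation[OF mono[OF i] sub[OF i] _ Y(1)])
         (auto intro: finite_subset)
  qed
  then have "(\<Sum>i\<in>{1..m}. (1 - 1 / exp 1) * (f i (Str \<union> C i) - f i Str))
    \<le> (\<Sum>i\<in>{1..m}. f i (Str \<union> S i) - f i Str)"
    by (rule sum_mono)
  then show ?thesis
    by (simp add: sum_distrib_left[symmetric] sum_subtractf)
qed

lemma alg2_output_approximation:
  assumes "finite V" "1 \<le> l"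
    and mono: "\<And>i. i \<in> {1..m} \<Longrightarrow> monotone_fn V (f i)"
    and sub: "\<And>i. i \<in> {1..m} \<Longrightarrow> submodular_fn V (f i)"
    and alg: "alg2_output V f m k l Str S"
    and "T \<subseteq> V" "card T \<le> l"
  shows "(1 - 1 / exp 1) * ((\<Sum>i\<in>{1..m}. f i (T \<union> S i)) - (\<Sum>i\<in>{1..m}. f i (S i)))
    \<le> (\<Sum>i\<in>{1..m}. f i (Str \<union> S i)) - (\<Sum>i\<in>{1..m}. f i (S i))"
proof -
  define G where "G A = (\<Sum>i\<in>{1..m}. f i (A \<union> S i))" for A
  have "monotone_fn V G"
    unfolding G_def using alg2_output_S(1)[OF alg] mono
    by (intro monotone_fn_sum monotone_fn_union_const)
  moreover have "submodular_fn V G"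
    unfolding G_def using alg2_output_S(1)[OF alg] sub
    by (intro submodular_fn_sum submodular_fn_union_const)
  moreover obtain X where X: "greedy_chain V {} (\<lambda>A e. \<Sum>i\<in>{1..m}. marg (f i) e (A \<union> S i)) l X"
    "Str = X l"
    using alg unfolding alg2_output_def by blast
  moreover have "(\<Sum>i\<in>{1..m}. marg (f i) e (A \<union> S i)) = marg G e ({} \<union> A)" for A e
    by (simp add: marg_def G_def sum_subtractf)
  ultimately have "(1 - 1 / exp 1) * (G ({} \<union> T) - G {}) \<le> G ({} \<union> X l) - G {}"
    using assms(1,2,6,7)
    by (intro greedy_chain_approximation[where gain = "\<lambda>A e. \<Sum>i\<in>{1..m}. marg (f i) e (A \<union> S i)"])
       (auto intro: finite_subset)
  then show ?thesis
    using X(2) by (simp add: G_def)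
qed

lemma combine_two_sided_bounds:
  fixes c opt \<theta>1 \<theta>2 \<beta> \<gamma> a b g :: real
  assumes "0 \<le> c"
    and "c * (a - \<beta>) \<le> \<theta>1 - \<beta>" "c * (b - \<beta>) \<le> \<theta>1 - \<beta>"
    and "c * (g - \<gamma>) \<le> \<theta>2 - \<gamma>" "c * (b - \<gamma>) \<le> \<theta>2 - \<gamma>"
    and "opt - a \<le> g - \<gamma> + (b - \<beta>)" "opt + \<gamma> + \<beta> \<le> g + a + b"
  shows "\<theta>1 \<ge> c * (opt - \<gamma>) + \<beta> - 2 * (\<theta>2 - \<gamma>) \<and> \<theta>2 \<ge> c * (opt - \<beta>) + \<gamma> - 2 * (\<theta>1 - \<beta>)"
proof -
  have "c * (opt - \<gamma>) \<le> c * ((a - \<beta>) + (g - \<gamma>) + (b - \<gamma>))"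
    and "c * (opt - \<beta>) \<le> c * ((g - \<gamma>) + (a - \<beta>) + (b - \<beta>))"
    using assms(1,6,7) by (intro mult_left_mono; simp)+
  then show ?thesis
    using assms(2-5) unfolding distrib_left by argo
qed

theorem mainTheorem8:
  fixes V :: "'a set" and f :: "nat \<Rightarrow> 'a set \<Rightarrow> real" and m k l :: nat
    and Str1 Str2 :: "'a set" and S1 S2 :: "nat \<Rightarrow> 'a set"
  assumes "finite V" and "1 \<le> l" and "l < k" and "k \<le> card V"
    and "\<And>i A. i \<in> {1..m} \<Longrightarrow> A \<subseteq> V \<Longrightarrow> f i A \<ge> 0"
    and "\<And>i. i \<in> {1..m} \<Longrightarrow> monotone_fn V (f i)"
    and "\<And>i. i \<in> {1..m} \<Longrightarrow> submodular_fn V (f i)"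
    and "alg1_output V f m k l Str1 S1"
    and "alg2_output V f m k l Str2 S2"
  shows "let \<theta>1 = (\<Sum>i\<in>{1..m}. f i (Str1 \<union> S1 i));
             \<theta>2 = (\<Sum>i\<in>{1..m}. f i (Str2 \<union> S2 i));
             \<beta> = (\<Sum>i\<in>{1..m}. f i Str1);
             \<gamma> = (\<Sum>i\<in>{1..m}. f i (S2 i))
         in \<theta>1 \<ge> (1 - 1 / exp 1) * (OPT V f m k l - \<gamma>) + \<beta> - 2 * (\<theta>2 - \<gamma>) \<and>
            \<theta>2 \<ge> (1 - 1 / exp 1) * (OPT V f m k l - \<beta>) + \<gamma> - 2 * (\<theta>1 - \<beta>)"
proof -
  obtain T S where T: "T \<subseteq> V" "card T \<le> l" and S: "\<And>i. S i \<subseteq> V" "\<And>i. card (S i) \<le> k - l"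
    and OPT: "OPT V f m k l = (\<Sum>i\<in>{1..m}. f i (T \<union> S i))"
    using OPT_attained[OF assms(1)] by blast
  note Str1 = alg1_output_Str[OF assms(8)] and S2 = alg2_output_S[OF assms(9)]
  have exchange_diff: "OPT V f m k l - (\<Sum>i\<in>{1..m}. f i (Str1 \<union> S i))
    \<le> (\<Sum>i\<in>{1..m}. f i (T \<union> S2 i)) - (\<Sum>i\<in>{1..m}. f i (S2 i))
      + ((\<Sum>i\<in>{1..m}. f i (Str1 \<union> S2 i)) - (\<Sum>i\<in>{1..m}. f i Str1))"
    unfolding OPT sum_subtractf[symmetric] sum.distrib[symmetric]
    by (intro sum_mono monotone_submodular_exchange_diff[of V]) (simp_all add: T S Str1 S2 assms(6,7))
  have exchange_sum: "OPT V f m k l + (\<Sum>i\<in>{1..m}. f i (S2 i)) + (\<Sum>i\<in>{1..m}. f i Str1)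
    \<le> (\<Sum>i\<in>{1..m}. f i (T \<union> S2 i)) + (\<Sum>i\<in>{1..m}. f i (Str1 \<union> S i))
      + (\<Sum>i\<in>{1..m}. f i (Str1 \<union> S2 i))"
    unfolding OPT sum.distrib[symmetric]
    by (intro sum_mono monotone_submodular_exchange_sum[of V]) (simp_all add: T S Str1 S2 assms(6,7))
  show ?thesis
    unfolding Let_def
    by (intro combine_two_sided_bounds[OF _ _ _ _ _ exchange_diff exchange_sum]
        alg1_output_approximation[of V l k m f] alg2_output_approximation[where k = k])
      (use assms(1-3,6-9) T S Str1(1) eq_imp_le[OF Str1(2)] S2 in \<open>simp_all add: less_imp_le\<close>)
qed

end
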